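(* Let $\mathcal{S}$ be the subdistribution monad, $\mathcal{S}(X)=\{p\colon X\to[0,1]\mid\sum_{x\in X}p(x)\le 1\}$ (unit: Dirac distributions; multiplication $\mu(P)(x)=\sum_{\nu}P(\nu)\nu(x)$), let $\mathcal{V}=[0,\infty]_+$, and let $\mathit{ev}_{\mathcal{S}}=\mathbb{E}\colon\mathcal{S}[0,\infty]\to[0,\infty]$, $\mathbb{E}(p)=\sum_{v}v\cdot p(v)$, with the convention $r\cdot\infty=\infty$ if $r>0$ and $0\cdot\infty=0$. For sets $X_1,X_2$ define $g_{X_1,X_2}\colon\mathcal{S}(X_1+X_2)\to\mathcal{S}X_1+\mathcal{S}X_2$ by $g_{X_1,X_2}(p)=p|_{X_1}$ (in the left summand) if $\mathrm{supp}(p)\cap X_1\neq\emptyset$, and $g_{X_1,X_2}(p)=p|_{X_2}$ (in the right summand) otherwise, where $\mathrm{supp}(p)=\{x\mid p(x)\neq0\}$. Then $g$ is a natural transformation that is compatible with the unit and the multiplication of $\mathcal{S}$ and is well-behaved with respect to $\mathbb{E}$.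
   Context: $[0,\infty]_+$ is the quantale on $[0,\infty]$ with the reversed order ($a\sqsubseteq b$ iff $a\ge b$) and extended addition as monoid operation; hence its top element is $\top=0$ and its bottom is $\bot=\infty$. For a monad $(T,\eta,\mu)$, a natural transformation $g\colon T((-)+(-))\Rightarrow T(-)+T(-)$ is compatible with the unit if $g_{Y_1,Y_2}\circ\eta_{Y_1+Y_2}=\eta_{Y_1}+\eta_{Y_2}$, and with the multiplication if $g_{Y_1,Y_2}\circ\mu_{Y_1+Y_2}=(\mu_{Y_1}+\mu_{Y_2})\circ g_{TY_1,TY_2}\circ Tg_{Y_1,Y_2}$, for all sets $Y_1,Y_2$. It is well-behaved with respect to $\mathit{ev}_T\colon T\mathcal{V}\to\mathcal{V}$ if for all sets $X_1,X_2$ and maps $f_i\colon X_i\to\mathcal{V}$: $\mathit{ev}_T\circ T[f_1,\top_{X_2}]=[\mathit{ev}_T\circ Tf_1,\top_{TX_2}]\circ g_{X_1,X_2}$, $\mathit{ev}_T\circ T[\bot_{X_1},f_2]=[\bot_{TX_1},\mathit{ev}_T\circ Tf_2]\circ g_{X_1,X_2}$, and $\mathit{ev}_T\circ T[\bot_{X_1},\top_{X_2}]=[\bot_{TX_1},\top_{TX_2}]\circ g_{X_1,X_2}$, where $\top_Z,\bot_Z$ are constant maps on $Z$ with values $\top,\bot$ of the quantale. *)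

theory Defs
  imports "HOL-Probability.Probability"
begin

text \<open>The subdistribution monad S is modelled by the library type 'a spmf
 (subprobability mass functions); S f = map_spmf f, unit = return_spmf,
 multiplication mu = (\<lambda>P. bind_spmf P id).
 The quantale [0,\<infinity>]_+ is carried by ennreal; its top (w.r.t. the reversed order) is 0,
 its bottom is \<infinity>.\<close>

definition mu_S :: "'a spmf spmf \<Rightarrow> 'a spmf" where
  "mu_S P = bind_spmf P id"

definition restr_left :: "('a + 'b) spmf \<Rightarrow> 'a spmf" where
  "restr_left p = bind_spmf p (case_sum return_spmf (\<lambda>_. return_pmf None))"

definition restr_right :: "('a + 'b) spmf \<Rightarrow> 'b spmf" where
  "restr_right p = bind_spmf p (case_sum (\<lambda>_. return_pmf None) return_spmf)"

definition g_S :: "('a + 'b) spmf \<Rightarrow> 'a spmf + 'b spmf" where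
  "g_S p = (if {x. spmf p x \<noteq> 0} \<inter> range Inl \<noteq> {} then Inl (restr_left p) else Inr (restr_right p))"

text \<open>Expectation E(p) = sum_v v * p(v) in [0,\<infinity>], with 0*\<infinity> = 0 and r*\<infinity> = \<infinity> for r>0
 (the ennreal multiplication).\<close>
definition ev_S :: "ennreal spmf \<Rightarrow> ennreal" where
  "ev_S p = (\<integral>\<^sup>+ v. v * ennreal (spmf p v) \<partial>count_space UNIV)"

end

theory Submission
  imports Defs
begin

text \<open>g only ever returns one of the restrictions p|X1, p|X2, and both commute with
 S(f1 + f2). The multiplication mu P meets X1 iff some q in the support of P does. Restriction
 to X1 commutes with mu because the q not meeting X1 have null restriction, so discarding them
 as g does is harmless; on X2 the same argument needs that no q meets X1, which is exactly when
 g chooses the right summand. For the expectation: if p charges X1, a function that is \<infinity>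
 there has infinite expectation and one vanishing on X2 only sees p|X1; otherwise both only
 see p|X2.\<close>

definition meets_Inl :: "('a + 'b) spmf \<Rightarrow> bool" where
  "meets_Inl p \<longleftrightarrow> (\<exists>a. Inl a \<in> set_spmf p)"

lemma g_S_conv_meets_Inl:
  "g_S p = (if meets_Inl p then Inl (restr_left p) else Inr (restr_right p))"
  unfolding g_S_def meets_Inl_def by (auto simp: in_set_spmf_iff_spmf)

lemma meets_Inl_map_sum [simp]: "meets_Inl (map_spmf (map_sum f1 f2) p) \<longleftrightarrow> meets_Inl p"
  unfolding meets_Inl_def by (force simp: map_sum_def split: sum.splits)

lemma meets_Inl_mu_S: "meets_Inl (mu_S P) \<longleftrightarrow> (\<exists>q\<in>set_spmf P. meets_Inl q)"
  unfolding meets_Inl_def mu_S_def by (auto simp: set_bind_spmf)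

lemma meets_Inl_map_g_S: "meets_Inl (map_spmf g_S P) \<longleftrightarrow> (\<exists>q\<in>set_spmf P. meets_Inl q)"
  by (auto simp: g_S_conv_meets_Inl meets_Inl_def)

lemma restr_left_eq_return_None: "\<not> meets_Inl p \<Longrightarrow> restr_left p = return_pmf None"
  unfolding restr_left_def meets_Inl_def
  by (subst bind_spmf_cong[where g="\<lambda>_. return_pmf None"]) (auto split: sum.split)

lemma restr_left_map_sum: "restr_left (map_spmf (map_sum f1 f2) p) = map_spmf f1 (restr_left p)"
  by (auto simp: restr_left_def map_spmf_conv_bind_spmf intro!: bind_spmf_cong split: sum.split)

lemma restr_right_map_sum: "restr_right (map_spmf (map_sum f1 f2) p) = map_spmf f2 (restr_right p)"
  by (auto simp: restr_right_def map_spmf_conv_bind_spmf intro!: bind_spmf_cong split: sum.split)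

lemma restr_left_mu_S: "restr_left (mu_S P) = mu_S (restr_left (map_spmf g_S P))"
  unfolding mu_S_def restr_left_def map_spmf_conv_bind_spmf
  by (auto intro!: bind_spmf_cong simp: g_S_conv_meets_Inl restr_left_def
      restr_left_eq_return_None[unfolded restr_left_def])

lemma restr_right_mu_S:
  assumes "\<forall>q\<in>set_spmf P. \<not> meets_Inl q"
  shows "restr_right (mu_S P) = mu_S (restr_right (map_spmf g_S P))"
  unfolding mu_S_def restr_right_def map_spmf_conv_bind_spmf
  using assms by (auto intro!: bind_spmf_cong simp: g_S_conv_meets_Inl restr_right_def)

lemma g_S_map_sum: "g_S (map_spmf (map_sum f1 f2) p) = map_sum (map_spmf f1) (map_spmf f2) (g_S p)"
  by (simp add: g_S_conv_meets_Inl restr_left_map_sum restr_right_map_sum)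

lemma g_S_return_spmf: "g_S (return_spmf z) = map_sum return_spmf return_spmf z"
  by (cases z) (auto simp: g_S_conv_meets_Inl meets_Inl_def restr_left_def restr_right_def)

lemma g_S_mu_S: "g_S (mu_S P) = map_sum mu_S mu_S (g_S (map_spmf g_S P))"
  by (auto simp: g_S_conv_meets_Inl meets_Inl_mu_S meets_Inl_map_g_S restr_left_mu_S
      restr_right_mu_S)

lemma nn_integral_measure_spmf_bind:
  "(\<integral>\<^sup>+ x. f x \<partial>measure_spmf (bind_spmf p g)) = (\<integral>\<^sup>+ y. \<integral>\<^sup>+ x. f x \<partial>measure_spmf (g y) \<partial>measure_spmf p)"
  unfolding measure_spmf_bind
  by (subst nn_integral_bind[where B="count_space UNIV"]) (auto simp: measurable_def space_measure_spmf)

lemma nn_integral_restr_left: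
  "(\<integral>\<^sup>+ x. f x \<partial>measure_spmf (restr_left p)) = (\<integral>\<^sup>+ y. case_sum f (\<lambda>_. 0) y \<partial>measure_spmf p)"
  unfolding restr_left_def nn_integral_measure_spmf_bind
  by (rule nn_integral_cong) (simp add: measure_spmf_return_spmf nn_integral_return split: sum.split)

lemma nn_integral_restr_right:
  "(\<integral>\<^sup>+ x. f x \<partial>measure_spmf (restr_right p)) = (\<integral>\<^sup>+ y. case_sum (\<lambda>_. 0) f y \<partial>measure_spmf p)"
  unfolding restr_right_def nn_integral_measure_spmf_bind
  by (rule nn_integral_cong) (simp add: measure_spmf_return_spmf nn_integral_return split: sum.split)

lemma nn_integral_measure_spmf_eq_top:
  assumes "x \<in> set_spmf p" and "f x = \<infinity>"
  shows "(\<integral>\<^sup>+ y. f y \<partial>measure_spmf p) = \<infinity>"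
proof -
  have "\<infinity> * emeasure (measure_spmf p) {x} = (\<integral>\<^sup>+ y. \<infinity> * indicator {x} y \<partial>measure_spmf p)"
    by (simp add: nn_integral_cmult_indicator)
  also have "\<dots> \<le> (\<integral>\<^sup>+ y. f y \<partial>measure_spmf p)"
    using assms(2) by (intro nn_integral_mono) (simp split: split_indicator)
  finally show ?thesis
    using assms(1) by (simp add: emeasure_spmf_single in_set_spmf_iff_spmf ennreal_mult_top top_unique)
qed

lemma ev_S_map_spmf: "ev_S (map_spmf h p) = (\<integral>\<^sup>+ x. h x \<partial>measure_spmf p)"
proof -
  have "ev_S (map_spmf h p) = (\<integral>\<^sup>+ v. v \<partial>measure_spmf (map_spmf h p))"
    unfolding ev_S_def nn_integral_measure_spmf by (simp add: mult.commute)
  then show ?thesis by (simp add: o_def)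
qed

lemma ev_S_case_sum_zero:
  "ev_S (map_spmf (case_sum f1 (\<lambda>_. 0)) p) = case_sum (\<lambda>q. ev_S (map_spmf f1 q)) (\<lambda>_. 0) (g_S p)"
proof (cases "meets_Inl p")
  case True
  then show ?thesis by (simp add: g_S_conv_meets_Inl ev_S_map_spmf nn_integral_restr_left)
next
  case False
  then have "(\<integral>\<^sup>+ x. case_sum f1 (\<lambda>_. 0) x \<partial>measure_spmf p) = (\<integral>\<^sup>+ x. 0 \<partial>measure_spmf p)"
    by (intro nn_integral_cong_AE) (auto simp: meets_Inl_def split: sum.split)
  with False show ?thesis by (simp add: g_S_conv_meets_Inl ev_S_map_spmf)
qed

lemma ev_S_case_sum_top:
  "ev_S (map_spmf (case_sum (\<lambda>_. \<infinity>) f2) p) = case_sum (\<lambda>_. \<infinity>) (\<lambda>q. ev_S (map_spmf f2 q)) (g_S p)"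
proof (cases "meets_Inl p")
  case True
  then obtain a where "Inl a \<in> set_spmf p" unfolding meets_Inl_def by blast
  then have "ev_S (map_spmf (case_sum (\<lambda>_. \<infinity>) f2) p) = \<infinity>"
    unfolding ev_S_map_spmf by (rule nn_integral_measure_spmf_eq_top) simp
  with True show ?thesis by (simp add: g_S_conv_meets_Inl)
next
  case False
  then have "(\<integral>\<^sup>+ x. case_sum (\<lambda>_. \<infinity>) f2 x \<partial>measure_spmf p)
      = (\<integral>\<^sup>+ x. case_sum (\<lambda>_. 0) f2 x \<partial>measure_spmf p)"
    by (intro nn_integral_cong_AE) (auto simp: meets_Inl_def split: sum.split)
  then have "ev_S (map_spmf (case_sum (\<lambda>_. \<infinity>) f2) p) = ev_S (map_spmf f2 (restr_right p))"
    by (simp only: ev_S_map_spmf nn_integral_restr_right)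
  with False show ?thesis by (simp add: g_S_conv_meets_Inl)
qed

theorem mainTheorem13:
  shows
    \<comment> \<open>naturality\<close>
    "(\<forall>(f1 :: 'a \<Rightarrow> 'c) (f2 :: 'b \<Rightarrow> 'd) p.
        g_S (map_spmf (map_sum f1 f2) p) = map_sum (map_spmf f1) (map_spmf f2) (g_S p))
   \<and> \<comment> \<open>compatibility with the unit\<close>
     (\<forall>z :: 'e + 'f. g_S (return_spmf z) = map_sum return_spmf return_spmf z)
   \<and> \<comment> \<open>compatibility with the multiplication\<close>
     (\<forall>P :: ('g + 'h) spmf spmf.
        g_S (mu_S P) = map_sum mu_S mu_S (g_S (map_spmf g_S P)))
   \<and> \<comment> \<open>well-behavedness with respect to ev_S\<close>
     (\<forall>(f1 :: 'i \<Rightarrow> ennreal) (f2 :: 'j \<Rightarrow> ennreal) p.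
        ev_S (map_spmf (case_sum f1 (\<lambda>_. 0)) p)
          = case_sum (\<lambda>q. ev_S (map_spmf f1 q)) (\<lambda>_. 0) (g_S p)
      \<and> ev_S (map_spmf (case_sum (\<lambda>_. \<infinity>) f2) p)
          = case_sum (\<lambda>_. \<infinity>) (\<lambda>q. ev_S (map_spmf f2 q)) (g_S p)
      \<and> ev_S (map_spmf (case_sum (\<lambda>_. \<infinity>) (\<lambda>_. 0)) p)
          = case_sum (\<lambda>_. \<infinity>) (\<lambda>_. 0) (g_S p))"
proof -
  have "ev_S (map_spmf (\<lambda>_. 0) q) = 0" for q :: "'j spmf"
    by (simp add: ev_S_map_spmf)
  then have "ev_S (map_spmf (case_sum (\<lambda>_. \<infinity>) (\<lambda>_. 0)) p) = case_sum (\<lambda>_. \<infinity>) (\<lambda>_. 0) (g_S p)"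
    for p :: "('i + 'j) spmf"
    using ev_S_case_sum_top[of "\<lambda>_. 0" p] by (cases "g_S p") (simp_all only: sum.case)
  then show ?thesis
    using g_S_map_sum g_S_return_spmf g_S_mu_S ev_S_case_sum_zero ev_S_case_sum_top by blast
qed

end
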